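(* For every integer $m\ge0$ and every integer $l>1$, \[ \mu_l^{(1,m+2)}=2P_{l-1}^{\{-2,-1,m\}} . \]
   Context: An $n$-board is the strip $[0,n]\times[0,1]$ divided into unit cells, each split into a left and a right half (slot). A $(w,g;t)$-comb is a tile consisting of a row of $t$ rectangles (teeth) of size $w\times1$, consecutive teeth separated by a gap of width $g$; gaps are not part of the tile and may be occupied by other tiles. (A $(\frac12,\frac12;1)$-comb is a half-square $\frac12\times1$.) A tiling is a placement of translated (unrotated) combs whose teeth cover the board exactly without overlap. Given a tiling of an $n$-board, an integer $x$ with $0<x<n$ is a cut point if every comb has all of its teeth in $[0,x]$ or all in $[x,n]$. A metatile of length $l$ is a tiling of an $l$-board with no cut point. A metatile is mixed if it contains combs of more than one type. For integers $1\le m_1<m_2$, $\mu_l^{(m_1,m_2)}$ is the number of mixed metatiles of length $l$ when tiling with $(\frac12,\frac12;m_1)$- and $(\frac12,\frac12;m_2)$-combs. For a finite set $W$ of integers, $P_n^W$ is the number of permutations $\pi$ of $\{1,\dots,n\}$ with $\pi(i)-i\in W$ for all $i$ (equivalently, the permanent of the $n\times n$ $(0,1)$ matrix whose $(i,j)$ entry is $1$ iff $j-i\in W$), with $P_0^W=1$. *)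

theory Defs
  imports Main "HOL-Combinatorics.Permutations"
begin

text \<open>Discrete model: the n-board [0,n] x [0,1] has 2n slots (half-cells), slot k being
  [k/2,(k+1)/2]. A placed (1/2,1/2;t)-comb is a pair (t,p): its teeth occupy slots
  p, p+2, ..., p+2(t-1).\<close>

definition comb_teeth :: "nat \<Rightarrow> nat \<Rightarrow> nat set" where
  "comb_teeth t p = {p + 2 * i | i. i < t}"

definition is_tiling :: "nat set \<Rightarrow> nat \<Rightarrow> (nat \<times> nat) set \<Rightarrow> bool" where
  "is_tiling T n C \<longleftrightarrow> finite C \<and> (\<forall>c\<in>C. fst c \<in> T)
     \<and> (\<forall>c\<in>C. \<forall>c'\<in>C. c \<noteq> c' \<longrightarrow> comb_teeth (fst c) (snd c) \<inter> comb_teeth (fst c') (snd c') = {})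
     \<and> (\<Union>c\<in>C. comb_teeth (fst c) (snd c)) = {..<2 * n}"

definition is_cut_point :: "nat \<Rightarrow> (nat \<times> nat) set \<Rightarrow> nat \<Rightarrow> bool" where
  "is_cut_point n C x \<longleftrightarrow> 0 < x \<and> x < n \<and>
     (\<forall>c\<in>C. comb_teeth (fst c) (snd c) \<subseteq> {..<2 * x} \<or> comb_teeth (fst c) (snd c) \<subseteq> {2 * x..})"

definition is_metatile :: "nat set \<Rightarrow> nat \<Rightarrow> (nat \<times> nat) set \<Rightarrow> bool" where
  "is_metatile T l C \<longleftrightarrow> is_tiling T l C \<and> \<not> (\<exists>x. is_cut_point l C x)"

definition is_mixed :: "(nat \<times> nat) set \<Rightarrow> bool" where
  "is_mixed C \<longleftrightarrow> card (fst ` C) > 1"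

definition mu :: "nat \<Rightarrow> nat \<Rightarrow> nat \<Rightarrow> nat" where
  "mu m1 m2 l = card {C. is_metatile {m1, m2} l C \<and> is_mixed C}"

definition P_W :: "nat \<Rightarrow> int set \<Rightarrow> nat" where
  "P_W n W = card {\<pi>. \<pi> permutes {1..n} \<and> (\<forall>i\<in>{1..n}. int (\<pi> i) - int i \<in> W)}"

end

theory Submission
  imports Defs
begin

text \<open>Let \<open>k = m + 2\<close> and call the \<open>(1/2, 1/2; k)\<close>-combs long. In a mixed metatile of
  length \<open>l\<close> every cut \<open>0 < x < l\<close> is straddled by a long comb, as half-squares straddle
  nothing. Long combs of equal parity occupy disjoint runs of cells, so no three of them overlap,
  and no two start in the same cell; between consecutive start cells the straddling condition
  forces the parities to alternate. Hence a mixed metatile is determined by the set \<open>S\<close> of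
  start cells together with the parity of the comb in cell \<open>0\<close>, and the sets that occur are
  exactly those whose spans \<open>[s, s + k]\<close> fit into the board, strictly cover every interior
  cut, and never overlap three at a time; conversely every such pair is realised by filling the
  remaining slots with half-squares.

  A permutation of \<open>{1..l - 1}\<close> with displacements in \<open>{-2, -1, m}\<close> is determined by its
  set \<open>U\<close> of forward jumps \<open>i \<mapsto> i + m\<close>: balancing the points that cross a cut in
  either direction shows that a non-jump \<open>i\<close> steps back by two exactly when \<open>i - 1\<close> lies
  under two jumps. The same balance shows that the admissible \<open>U\<close> are exactly the shifted
  start sets \<open>Suc ` S\<close>, and the factor \<open>2\<close> is the parity in cell \<open>0\<close>.\<close>

lemma nat_set_predecessor:
  fixes S :: "nat set"
  assumes "finite S" "t \<in> S" "t < x"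
  obtains s where "s \<in> S" "s < x" "\<forall>u\<in>S. u < x \<longrightarrow> u \<le> s"
proof
  let ?before = "{u\<in>S. u < x}"
  have "finite ?before" "?before \<noteq> {}"
    using assms by auto
  then show "Max ?before \<in> S" "Max ?before < x" "\<forall>u\<in>S. u < x \<longrightarrow> u \<le> Max ?before"
    using Max_in[of ?before] Max_ge[of ?before] by auto
qed

lemma card_less_predecessor:
  fixes S :: "nat set"
  assumes "finite S" "s \<in> S" "s < x" "\<forall>u\<in>S. u < x \<longrightarrow> u \<le> s"
  shows "card {u\<in>S. u < x} = Suc (card {u\<in>S. u < s})"
proof -
  have "{u\<in>S. u < x} = insert s {u\<in>S. u < s}"
    using assms(2-4) by force
  then show ?thesis
    using assms(1) by simp
qed

section \<open>Combs and half-square completions\<close>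

abbreviation teeth :: "nat \<times> nat \<Rightarrow> nat set" where
  "teeth c \<equiv> comb_teeth (fst c) (snd c)"

lemma mem_comb_teeth_iff:
  "x \<in> comb_teeth t p \<longleftrightarrow> x mod 2 = p mod 2 \<and> p div 2 \<le> x div 2 \<and> x div 2 < p div 2 + t"
proof
  assume "x \<in> comb_teeth t p"
  then obtain i where "i < t" "x = p + 2 * i" unfolding comb_teeth_def by auto
  then show "x mod 2 = p mod 2 \<and> p div 2 \<le> x div 2 \<and> x div 2 < p div 2 + t" by auto
next
  assume x: "x mod 2 = p mod 2 \<and> p div 2 \<le> x div 2 \<and> x div 2 < p div 2 + t"
  moreover have "x = 2 * (x div 2) + x mod 2" "p = 2 * (p div 2) + p mod 2"
    by simp_all
  ultimately have "x = p + 2 * (x div 2 - p div 2)" "x div 2 - p div 2 < t"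
    by linarith+
  then show "x \<in> comb_teeth t p" unfolding comb_teeth_def by blast
qed

text \<open>Stated for \<open>Suc 0\<close>, the form the simplifier gives to the tooth count \<open>1\<close>.\<close>

lemma comb_teeth_Suc_0 [simp]: "comb_teeth (Suc 0) p = {p}"
  unfolding comb_teeth_def by auto

lemma comb_teeth_first_last:
  assumes "0 < t"
  shows "p \<in> comb_teeth t p" "p + 2 * (t - 1) \<in> comb_teeth t p"
  unfolding comb_teeth_def using assms by (auto intro!: exI[of _ 0] exI[of _ "t - 1"])

lemma comb_teeth_disjoint_iff:
  assumes "0 < t" "0 < t'"
  shows "comb_teeth t p \<inter> comb_teeth t' q = {} \<longleftrightarrow>
    p mod 2 \<noteq> q mod 2 \<or> p div 2 + t \<le> q div 2 \<or> q div 2 + t' \<le> p div 2"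
proof
  assume disj: "comb_teeth t p \<inter> comb_teeth t' q = {}"
  show "p mod 2 \<noteq> q mod 2 \<or> p div 2 + t \<le> q div 2 \<or> q div 2 + t' \<le> p div 2"
  proof (rule ccontr)
    assume overlap: "\<not> ?thesis"
    define x where "x = 2 * max (p div 2) (q div 2) + p mod 2"
    have "x \<in> comb_teeth t p" "x \<in> comb_teeth t' q"
      unfolding mem_comb_teeth_iff x_def using assms overlap by auto
    with disj show False by blast
  qed
qed (auto simp: mem_comb_teeth_iff)

lemma is_mixed_iff:
  assumes "finite C"
  shows "is_mixed C \<longleftrightarrow> (\<exists>c\<in>C. \<exists>c'\<in>C. fst c \<noteq> fst c')"
proof -
  have "card (fst ` C) \<le> 1 \<longleftrightarrow> (\<forall>a\<in>fst ` C. \<forall>b\<in>fst ` C. a = b)"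
    using card_le_Suc0_iff_eq[of "fst ` C"] assms by simp
  then show ?thesis unfolding is_mixed_def not_le[symmetric] by blast
qed

definition fill_half_squares :: "nat \<Rightarrow> (nat \<times> nat) set \<Rightarrow> (nat \<times> nat) set" where
  "fill_half_squares n L = L \<union> Pair 1 ` ({..<2 * n} - \<Union>(teeth ` L))"

lemma tiling_eq_fill_half_squares:
  assumes C: "is_tiling T n C" and "L \<subseteq> C" and "\<forall>c\<in>C - L. fst c = 1"
  shows "C = fill_half_squares n L"
proof -
  have disj: "teeth c \<inter> teeth c' = {}" if "c \<in> C" "c' \<in> C" "c \<noteq> c'" for c c'
    using C that unfolding is_tiling_def by blast
  have cover: "\<Union>(teeth ` C) = {..<2 * n}"
    using C unfolding is_tiling_def by blast
  have half: "c = (1, snd c)" "teeth c = {snd c}" if "c \<in> C - L" for c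
  proof -
    have "fst c = 1" using assms(3) that by blast
    then show "c = (1, snd c)" "teeth c = {snd c}" by (simp_all add: prod_eq_iff)
  qed
  show ?thesis
  proof
    show "C \<subseteq> fill_half_squares n L"
    proof
      fix c assume "c \<in> C"
      show "c \<in> fill_half_squares n L"
      proof (cases "c \<in> L")
        case False
        then have "snd c \<in> {..<2 * n} - \<Union>(teeth ` L)"
          using half[of c] cover disj[of c] \<open>c \<in> C\<close> \<open>L \<subseteq> C\<close> by blast
        then show ?thesis unfolding fill_half_squares_def using half[of c] \<open>c \<in> C\<close> False by auto
      qed (simp add: fill_half_squares_def)
    qed
  next
    show "fill_half_squares n L \<subseteq> C"
    proof
      fix c assume "c \<in> fill_half_squares n L"
      then consider "c \<in> L" | q where "c = (1, q)" "q < 2 * n" "q \<notin> \<Union>(teeth ` L)"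
        unfolding fill_half_squares_def by auto
      then show "c \<in> C"
      proof cases
        case (2 q)
        then obtain c' where "c' \<in> C" "q \<in> teeth c'" using cover by blast
        then show ?thesis using 2 half[of c'] \<open>L \<subseteq> C\<close> by force
      qed (use \<open>L \<subseteq> C\<close> in blast)
    qed
  qed
qed

lemma is_tiling_fill_half_squares:
  assumes "finite L" "fst ` L \<subseteq> T" "1 \<in> T"
    and "\<And>c c'. c \<in> L \<Longrightarrow> c' \<in> L \<Longrightarrow> c \<noteq> c' \<Longrightarrow> teeth c \<inter> teeth c' = {}"
    and "\<Union>(teeth ` L) \<subseteq> {..<2 * n}"
  shows "is_tiling T n (fill_half_squares n L)"
  unfolding is_tiling_def
proof (intro conjI ballI impI)
  show "finite (fill_half_squares n L)"
    using assms(1) by (simp add: fill_half_squares_def)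
  show "fst c \<in> T" if "c \<in> fill_half_squares n L" for c
    using that assms(2,3) by (auto simp: fill_half_squares_def)
  show "teeth c \<inter> teeth c' = {}"
    if "c \<in> fill_half_squares n L" "c' \<in> fill_half_squares n L" "c \<noteq> c'" for c c'
    using that assms(4)[of c c'] unfolding fill_half_squares_def by auto
  have "\<Union>(teeth ` Pair 1 ` X) = X" for X :: "nat set"
    by auto
  then show "\<Union>(teeth ` fill_half_squares n L) = {..<2 * n}"
    using assms(5) unfolding fill_half_squares_def image_Un Union_Un_distrib by blast
qed

lemma mem_fill_half_squares_iff:
  assumes "t \<noteq> 1"
  shows "(t, p) \<in> fill_half_squares n L \<longleftrightarrow> (t, p) \<in> L"
  using assms unfolding fill_half_squares_def by auto

section \<open>Mixed metatiles and admissible start sets\<close>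

definition admissible_starts :: "nat \<Rightarrow> nat \<Rightarrow> nat set \<Rightarrow> bool" where
  "admissible_starts k l S \<longleftrightarrow>
     (\<forall>s\<in>S. s + k \<le> l) \<and> (\<forall>x. 0 < x \<and> x < l \<longrightarrow> (\<exists>s\<in>S. s < x \<and> x < s + k)) \<and>
     (\<forall>a\<in>S. \<forall>b\<in>S. \<forall>c\<in>S. a < b \<and> b < c \<longrightarrow> a + k \<le> c)"

definition comb_starts :: "nat \<Rightarrow> (nat \<times> nat) set \<Rightarrow> nat set" where
  "comb_starts k C = (\<lambda>p. p div 2) ` {p. (k, p) \<in> C}"

definition first_parity :: "nat \<Rightarrow> (nat \<times> nat) set \<Rightarrow> nat" where
  "first_parity k C = (if (k, 0) \<in> C then 0 else 1)"

definition start_parity :: "nat set \<Rightarrow> nat \<Rightarrow> nat \<Rightarrow> nat" where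
  "start_parity S e s = (e + card {t\<in>S. t < s}) mod 2"

definition long_combs :: "nat \<Rightarrow> nat set \<Rightarrow> nat \<Rightarrow> (nat \<times> nat) set" where
  "long_combs k S e = (\<lambda>s. (k, 2 * s + start_parity S e s)) ` S"

lemma start_parity_less_2: "start_parity S e s < 2"
  unfolding start_parity_def by simp

lemma mem_long_combs_iff:
  "(t, p) \<in> long_combs k S e \<longleftrightarrow> t = k \<and> p div 2 \<in> S \<and> p mod 2 = start_parity S e (p div 2)"
proof
  assume "(t, p) \<in> long_combs k S e"
  then obtain s where "s \<in> S" "t = k" "p = 2 * s + start_parity S e s"
    unfolding long_combs_def by blast
  then show "t = k \<and> p div 2 \<in> S \<and> p mod 2 = start_parity S e (p div 2)"
    using start_parity_less_2[of S e s] by simp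
next
  assume p: "t = k \<and> p div 2 \<in> S \<and> p mod 2 = start_parity S e (p div 2)"
  have "p = 2 * (p div 2) + p mod 2"
    by simp
  then show "(t, p) \<in> long_combs k S e"
    using p unfolding long_combs_def by (metis (no_types, lifting) image_eqI)
qed

lemma mem_long_combsE:
  assumes "c \<in> long_combs k S e"
  obtains p where "c = (k, p)" "p div 2 \<in> S" "p mod 2 = start_parity S e (p div 2)"
proof -
  obtain s where "s \<in> S" "c = (k, 2 * s + start_parity S e s)"
    using assms unfolding long_combs_def by blast
  then show thesis
    using start_parity_less_2[of S e s] by (intro that[of "2 * s + start_parity S e s"]) simp_all
qed

lemma start_parity_0: "start_parity S e 0 = e mod 2"
  unfolding start_parity_def by simp

lemma zero_mem_admissible_starts:
  assumes "admissible_starts k l S" "1 < l"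
  shows "0 \<in> S"
  using assms unfolding admissible_starts_def by fastforce

context
  fixes k l :: nat and C :: "(nat \<times> nat) set"
  assumes k: "2 \<le> k" and C: "is_metatile {1, k} l C"
begin

lemma metatile_is_tiling: "is_tiling {1, k} l C"
  using C unfolding is_metatile_def by blast

lemma finite_metatile: "finite C"
  using metatile_is_tiling unfolding is_tiling_def by blast

lemma metatile_comb_type: "c \<in> C \<Longrightarrow> fst c = 1 \<or> fst c = k"
  using C unfolding is_metatile_def is_tiling_def by blast

lemma metatile_teeth_disjoint: "c \<in> C \<Longrightarrow> c' \<in> C \<Longrightarrow> c \<noteq> c' \<Longrightarrow> teeth c \<inter> teeth c' = {}"
  using C unfolding is_metatile_def is_tiling_def by blast

lemma metatile_teeth_on_board: "c \<in> C \<Longrightarrow> teeth c \<subseteq> {..<2 * l}"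
  using C unfolding is_metatile_def is_tiling_def by blast

lemma metatile_no_cut_point:
  "0 < x \<Longrightarrow> x < l \<Longrightarrow> \<exists>c\<in>C. \<not> teeth c \<subseteq> {..<2 * x} \<and> \<not> teeth c \<subseteq> {2 * x..}"
  using C unfolding is_metatile_def is_cut_point_def by blast

lemma long_comb_fits:
  assumes "(k, p) \<in> C"
  shows "p div 2 + k \<le> l"
proof -
  have "p + 2 * (k - 1) < 2 * l"
    using comb_teeth_first_last(2)[of k p] metatile_teeth_on_board[OF assms] k by auto
  moreover have "2 * (p div 2) \<le> p"
    by simp
  ultimately show ?thesis
    using k by linarith
qed

lemma long_combs_apart:
  assumes "(k, p) \<in> C" "(k, q) \<in> C" "p \<noteq> q" "p mod 2 = q mod 2"
  shows "p div 2 + k \<le> q div 2 \<or> q div 2 + k \<le> p div 2"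
  using metatile_teeth_disjoint[OF assms(1,2)] assms(3,4) comb_teeth_disjoint_iff[of k k p q] k
  by simp

lemma cut_straddled:
  assumes "0 < x" "x < l"
  obtains p where "(k, p) \<in> C" "p div 2 < x" "x < p div 2 + k"
proof -
  obtain c where c: "c \<in> C" "\<not> teeth c \<subseteq> {..<2 * x}" "\<not> teeth c \<subseteq> {2 * x..}"
    using metatile_no_cut_point[OF assms] by blast
  obtain y z where yz: "y \<in> teeth c" "2 * x \<le> y" "z \<in> teeth c" "z < 2 * x"
    using c(2,3) by (auto simp: subset_iff not_less)
  then have "fst c \<noteq> 1"
    by (cases c) auto
  then have "fst c = k"
    using metatile_comb_type[OF c(1)] by simp
  moreover have "snd c div 2 \<le> z div 2" "y div 2 < snd c div 2 + fst c"
    using yz(1,3) unfolding mem_comb_teeth_iff by auto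
  moreover have "z div 2 < x" "x \<le> y div 2"
    using yz(2,4) by auto
  ultimately show thesis
    using that[of "snd c"] c(1) by (cases c) auto
qed

lemma comb_starts_sparse:
  assumes abc: "a \<in> comb_starts k C" "b \<in> comb_starts k C" "c \<in> comb_starts k C" "a < b" "b < c"
  shows "a + k \<le> c"
proof -
  obtain pa pb pc where p: "(k, pa) \<in> C" "(k, pb) \<in> C" "(k, pc) \<in> C"
    and cells: "a = pa div 2" "b = pb div 2" "c = pc div 2"
    using abc(1-3) unfolding comb_starts_def by blast
  then have "pa \<noteq> pb" "pa \<noteq> pc" "pb \<noteq> pc"
    using abc(4,5) by auto
  have "pa mod 2 = pb mod 2 \<or> pa mod 2 = pc mod 2 \<or> pb mod 2 = pc mod 2"
    by presburger
  then consider "pa mod 2 = pb mod 2" | "pa mod 2 = pc mod 2" | "pb mod 2 = pc mod 2"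
    by blast
  then show ?thesis
  proof cases
    case 1
    then show ?thesis
      using long_combs_apart[OF p(1,2) \<open>pa \<noteq> pb\<close>] cells abc(4,5) by auto
  next
    case 2
    then show ?thesis
      using long_combs_apart[OF p(1,3) \<open>pa \<noteq> pc\<close>] cells abc(4,5) by auto
  next
    case 3
    then show ?thesis
      using long_combs_apart[OF p(2,3) \<open>pb \<noteq> pc\<close>] cells abc(4,5) by auto
  qed
qed

lemma admissible_comb_starts: "admissible_starts k l (comb_starts k C)"
proof -
  have fit: "s + k \<le> l" if "s \<in> comb_starts k C" for s
    using that long_comb_fits unfolding comb_starts_def by auto
  have cover: "\<exists>s\<in>comb_starts k C. s < x \<and> x < s + k" if x: "0 < x" "x < l" for x
  proof -
    obtain p where "(k, p) \<in> C" "p div 2 < x" "x < p div 2 + k"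
      by (rule cut_straddled[OF x])
    then show ?thesis
      unfolding comb_starts_def by blast
  qed
  show ?thesis
    unfolding admissible_starts_def using fit cover comb_starts_sparse by blast
qed

lemma finite_comb_starts: "finite (comb_starts k C)"
proof (rule finite_subset)
  show "comb_starts k C \<subseteq> {..l}"
    using long_comb_fits unfolding comb_starts_def by force
qed simp

lemma consecutive_long_combs_alternate:
  assumes p: "(k, p) \<in> C" and q: "(k, q) \<in> C" and "q div 2 < p div 2"
    and gap: "\<forall>t\<in>comb_starts k C. \<not> (q div 2 < t \<and> t < p div 2)"
  shows "p mod 2 \<noteq> q mod 2"
proof
  assume "p mod 2 = q mod 2"
  then have "q div 2 + k \<le> p div 2"
    using long_combs_apart[OF q p] \<open>q div 2 < p div 2\<close> by auto
  then have "0 < q div 2 + k" "q div 2 + k < l"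
    using long_comb_fits[OF p] k by auto
  then obtain r where r: "(k, r) \<in> C" "r div 2 < q div 2 + k" "q div 2 + k < r div 2 + k"
    by (rule cut_straddled)
  then have "r div 2 \<in> comb_starts k C"
    unfolding comb_starts_def by blast
  then show False
    using gap r \<open>q div 2 + k \<le> p div 2\<close> by auto
qed

context
  assumes mixed: "is_mixed C"
begin

lemma half_square_exists: "\<exists>q. (1, q) \<in> C"
proof -
  obtain c c' where "c \<in> C" "c' \<in> C" "fst c \<noteq> fst c'"
    using mixed is_mixed_iff[OF finite_metatile] by blast
  then have "c = (1, snd c) \<and> c \<in> C \<or> c' = (1, snd c') \<and> c' \<in> C"
    using metatile_comb_type[of c] metatile_comb_type[of c'] by (auto simp: prod_eq_iff)
  then show ?thesis
    by metis
qed

text \<open>Two long combs starting in the same cell would fill the cells they span, and every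
  further comb would have to lie on one side of them; mixedness provides a half-square there,
  and the cut next to the pair is then straddled by no comb.\<close>

lemma long_combs_distinct_cells:
  assumes p: "(k, p) \<in> C" and q: "(k, q) \<in> C" and cell: "p div 2 = q div 2"
  shows "p = q"
proof (rule ccontr)
  assume "p \<noteq> q"
  define s where "s = p div 2"
  have parity: "r mod 2 = p mod 2 \<or> r mod 2 = q mod 2" for r
    using \<open>p \<noteq> q\<close> cell by (metis div_mult_mod_eq mod2_eq_if)
  have apart: "r div 2 + k \<le> s \<or> s + k \<le> r div 2" if "(k, r) \<in> C" "r \<noteq> p" "r \<noteq> q" for r
    using parity[of r] long_combs_apart[OF that(1) p that(2)] long_combs_apart[OF that(1) q that(3)]
      cell unfolding s_def by auto
  obtain h where h: "(1, h) \<in> C"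
    using half_square_exists by blast
  have "h \<notin> comb_teeth k p" "h \<notin> comb_teeth k q"
    using metatile_teeth_disjoint[OF h p] metatile_teeth_disjoint[OF h q] k by auto
  then have h_out: "h div 2 < s \<or> s + k \<le> h div 2"
    using parity[of h] cell unfolding s_def mem_comb_teeth_iff by auto
  have "h < 2 * l"
    using metatile_teeth_on_board[OF h] by simp
  define x where "x = (if h div 2 < s then s else s + k)"
  have "0 < x" "x < l"
    using h_out \<open>h < 2 * l\<close> long_comb_fits[OF p] k unfolding x_def s_def by auto
  then obtain r where r: "(k, r) \<in> C" "r div 2 < x" "x < r div 2 + k"
    by (rule cut_straddled)
  moreover have "r \<noteq> p" "r \<noteq> q"
    using r cell unfolding x_def s_def by (auto split: if_splits)
  ultimately show False
    using apart[of r] unfolding x_def by (auto split: if_splits)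
qed

lemma long_comb_parity:
  assumes "(k, p) \<in> C"
  shows "p mod 2 = start_parity (comb_starts k C) (first_parity k C) (p div 2)"
  using assms
proof (induction "p div 2" arbitrary: p rule: less_induct)
  case less
  let ?S = "comb_starts k C"
  show ?case
  proof (cases "p div 2 = 0")
    case True
    then have "p = 0 \<or> p = 1"
      by auto
    moreover have "(k, 0) \<notin> C" if "p = 1"
      using long_combs_distinct_cells[OF _ less.prems, of 0] that by auto
    ultimately show ?thesis
      using True less.prems unfolding start_parity_def first_parity_def by auto
  next
    case False
    have "1 < l"
      using long_comb_fits[OF less.prems] False k by linarith
    then have "0 \<in> ?S"
      using zero_mem_admissible_starts[OF admissible_comb_starts] by simp
    then obtain s where s: "s \<in> ?S" "s < p div 2" "\<forall>t\<in>?S. t < p div 2 \<longrightarrow> t \<le> s"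
      using False finite_comb_starts nat_set_predecessor[of ?S 0 "p div 2"] by blast
    then obtain q where q: "(k, q) \<in> C" "q div 2 = s"
      unfolding comb_starts_def by blast
    have "p mod 2 \<noteq> q mod 2"
      using consecutive_long_combs_alternate[OF less.prems q(1)] q(2) s by force
    moreover have "q mod 2 = start_parity ?S (first_parity k C) s"
      using less.hyps[of q] q s(2) by simp
    moreover have "card {t\<in>?S. t < p div 2} = Suc (card {t\<in>?S. t < s})"
      using card_less_predecessor[OF finite_comb_starts s] .
    ultimately show ?thesis
      unfolding start_parity_def by presburger
  qed
qed

lemma long_combs_comb_starts:
  "long_combs k (comb_starts k C) (first_parity k C) = {c\<in>C. fst c = k}"
proof (intro set_eqI)
  fix c :: "nat \<times> nat"
  obtain t p where c: "c = (t, p)"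
    by fastforce
  have "(k, p) \<in> C" if start: "p div 2 \<in> comb_starts k C"
    and parity: "p mod 2 = start_parity (comb_starts k C) (first_parity k C) (p div 2)"
  proof -
    obtain q where q: "(k, q) \<in> C" "q div 2 = p div 2"
      using start unfolding comb_starts_def by auto
    then have "q mod 2 = p mod 2"
      using long_comb_parity[OF q(1)] parity by simp
    then have "q = p"
      using q(2) by (metis div_mult_mod_eq)
    then show ?thesis
      using q(1) by simp
  qed
  moreover have "p div 2 \<in> comb_starts k C" if "(k, p) \<in> C"
    using that unfolding comb_starts_def by blast
  ultimately show "c \<in> long_combs k (comb_starts k C) (first_parity k C) \<longleftrightarrow> c \<in> {c\<in>C. fst c = k}"
    unfolding c mem_long_combs_iff using long_comb_parity by auto
qed

lemma metatile_eq_fill_half_squares: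
  "C = fill_half_squares l (long_combs k (comb_starts k C) (first_parity k C))"
  unfolding long_combs_comb_starts
  by (rule tiling_eq_fill_half_squares[OF metatile_is_tiling]) (use metatile_comb_type in auto)

end

end

context
  fixes k l :: nat and S :: "nat set" and e :: nat
  assumes k: "2 \<le> k" and S: "admissible_starts k l S"
begin

lemma admissible_starts_fit: "s \<in> S \<Longrightarrow> s + k \<le> l"
  using S unfolding admissible_starts_def by blast

lemma admissible_starts_cover: "0 < x \<Longrightarrow> x < l \<Longrightarrow> \<exists>s\<in>S. s < x \<and> x < s + k"
  using S unfolding admissible_starts_def by blast

lemma admissible_starts_sparse: "a \<in> S \<Longrightarrow> b \<in> S \<Longrightarrow> c \<in> S \<Longrightarrow> a < b \<Longrightarrow> b < c \<Longrightarrow> a + k \<le> c"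
  using S unfolding admissible_starts_def by blast

lemma finite_admissible_starts: "finite S"
proof (rule finite_subset)
  show "S \<subseteq> {..l}"
    using admissible_starts_fit by force
qed simp

lemma start_parity_neq:
  assumes "s \<in> S" "s' \<in> S" "s < s'" "s' < s + k"
  shows "start_parity S e s \<noteq> start_parity S e s'"
proof -
  have "\<forall>t\<in>S. t < s' \<longrightarrow> t \<le> s"
    using admissible_starts_sparse[of s _ s'] assms by fastforce
  then have "card {t\<in>S. t < s'} = Suc (card {t\<in>S. t < s})"
    using card_less_predecessor[OF finite_admissible_starts assms(1,3)] by blast
  then show ?thesis
    unfolding start_parity_def by presburger
qed

lemma long_combs_disjoint:
  assumes "c \<in> long_combs k S e" "c' \<in> long_combs k S e" "c \<noteq> c'"
  shows "teeth c \<inter> teeth c' = {}"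
proof -
  obtain p q where c: "c = (k, p)" "c' = (k, q)" and pq: "p div 2 \<in> S" "q div 2 \<in> S"
    "p mod 2 = start_parity S e (p div 2)" "q mod 2 = start_parity S e (q div 2)"
    using mem_long_combsE[OF assms(1)] mem_long_combsE[OF assms(2)] by metis
  have "p \<noteq> q"
    using assms(3) c by simp
  then have "p div 2 \<noteq> q div 2"
    using pq by (metis div_mult_mod_eq)
  then consider "p div 2 < q div 2" | "q div 2 < p div 2"
    by linarith
  then have "p mod 2 \<noteq> q mod 2 \<or> p div 2 + k \<le> q div 2 \<or> q div 2 + k \<le> p div 2"
  proof cases
    case 1
    then show ?thesis
      using start_parity_neq[OF pq(1,2) 1] pq(3,4) by linarith
  next
    case 2
    then show ?thesis
      using start_parity_neq[OF pq(2,1) 2] pq(3,4) by linarith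
  qed
  then show ?thesis
    using c comb_teeth_disjoint_iff[of k k p q] k by simp
qed

lemma long_combs_on_board:
  assumes "c \<in> long_combs k S e"
  shows "teeth c \<subseteq> {..<2 * l}"
proof
  fix x assume x: "x \<in> teeth c"
  obtain p where "c = (k, p)" "p div 2 \<in> S"
    using assms by (rule mem_long_combsE)
  then have "x div 2 < l"
    using x admissible_starts_fit unfolding mem_comb_teeth_iff by fastforce
  then show "x \<in> {..<2 * l}"
    by simp
qed

lemma is_tiling_fill_long_combs: "is_tiling {1, k} l (fill_half_squares l (long_combs k S e))"
proof (rule is_tiling_fill_half_squares)
  show "finite (long_combs k S e)"
    unfolding long_combs_def using finite_admissible_starts by simp
  show "fst ` long_combs k S e \<subseteq> {1, k}"
    unfolding long_combs_def by auto
  show "\<Union>(teeth ` long_combs k S e) \<subseteq> {..<2 * l}"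
    using long_combs_on_board by blast
qed (simp_all add: long_combs_disjoint)

lemma fill_long_combs_no_cut_point: "\<not> is_cut_point l (fill_half_squares l (long_combs k S e)) x"
proof
  assume cut: "is_cut_point l (fill_half_squares l (long_combs k S e)) x"
  then obtain s where s: "s \<in> S" "s < x" "x < s + k"
    using admissible_starts_cover unfolding is_cut_point_def by blast
  define p where "p = 2 * s + start_parity S e s"
  have "(k, p) \<in> fill_half_squares l (long_combs k S e)"
    unfolding fill_half_squares_def long_combs_def p_def using s(1) by blast
  then have "comb_teeth k p \<subseteq> {..<2 * x} \<or> comb_teeth k p \<subseteq> {2 * x..}"
    using cut unfolding is_cut_point_def by fastforce
  moreover have "p \<in> comb_teeth k p" "p + 2 * (k - 1) \<in> comb_teeth k p"
    using comb_teeth_first_last k by simp_all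
  moreover have "p < 2 * x" "2 * x \<le> p + 2 * (k - 1)"
    using s start_parity_less_2[of S e s] unfolding p_def by linarith+
  ultimately show False
    by auto
qed

lemma comb_starts_fill_long_combs: "comb_starts k (fill_half_squares l (long_combs k S e)) = S"
proof -
  have "{p. (k, p) \<in> fill_half_squares l (long_combs k S e)} = {p. (k, p) \<in> long_combs k S e}"
    using mem_fill_half_squares_iff k by simp
  moreover have "(\<lambda>p. p div 2) ` {p. (k, p) \<in> long_combs k S e} = S"
  proof (intro equalityI subsetI)
    fix s assume "s \<in> S"
    then have "(k, 2 * s + start_parity S e s) \<in> long_combs k S e"
      unfolding long_combs_def by blast
    moreover have "s = (2 * s + start_parity S e s) div 2"
      using start_parity_less_2[of S e s] by simp
    ultimately show "s \<in> (\<lambda>p. p div 2) ` {p. (k, p) \<in> long_combs k S e}"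
      by blast
  qed (auto simp: mem_long_combs_iff)
  ultimately show ?thesis
    unfolding comb_starts_def by simp
qed

context
  assumes l: "2 \<le> l" and e: "e < 2"
begin

lemma is_mixed_fill_long_combs: "is_mixed (fill_half_squares l (long_combs k S e))"
proof -
  have fin: "finite (fill_half_squares l (long_combs k S e))"
    using is_tiling_fill_long_combs unfolding is_tiling_def by blast
  have "0 \<in> S"
    using zero_mem_admissible_starts[OF S] l by simp
  then have long: "(k, e) \<in> fill_half_squares l (long_combs k S e)"
    using mem_fill_half_squares_iff[of k e] k e start_parity_0[of S e] by (simp add: mem_long_combs_iff)
  have "1 - e \<notin> teeth c" if c: "c \<in> long_combs k S e" for c
  proof
    assume tooth: "1 - e \<in> teeth c"
    obtain p where p: "c = (k, p)" "p div 2 \<in> S" "p mod 2 = start_parity S e (p div 2)"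
      by (rule mem_long_combsE[OF c])
    then have "p div 2 = 0" "(1 - e) mod 2 = p mod 2"
      using tooth unfolding mem_comb_teeth_iff by auto
    then have "(1 - e) mod 2 = e"
      using p(3) start_parity_0[of S e] e by simp
    moreover have "e = 0 \<or> e = 1"
      using e by linarith
    ultimately show False
      by auto
  qed
  then have half: "(1, 1 - e) \<in> fill_half_squares l (long_combs k S e)"
    unfolding fill_half_squares_def using l by auto
  show ?thesis
    unfolding is_mixed_iff[OF fin] using k by (intro bexI[OF _ long] bexI[OF _ half]) simp
qed

lemma first_parity_fill_long_combs: "first_parity k (fill_half_squares l (long_combs k S e)) = e"
proof -
  have "0 \<in> S"
    using zero_mem_admissible_starts[OF S] l by simp
  then have "(k, 0) \<in> fill_half_squares l (long_combs k S e) \<longleftrightarrow> e = 0"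
    using mem_fill_half_squares_iff[of k 0] k e start_parity_0[of S e] by (auto simp: mem_long_combs_iff)
  then show ?thesis
    unfolding first_parity_def using e by auto
qed

end

end

theorem card_mixed_metatiles:
  assumes "2 \<le> k" "2 \<le> l"
  shows "card {C. is_metatile {1, k} l C \<and> is_mixed C} = 2 * card {S. admissible_starts k l S}"
proof -
  let ?M = "{C. is_metatile {1, k} l C \<and> is_mixed C}"
  let ?A = "{S. admissible_starts k l S} \<times> {0, 1::nat}"
  have "bij_betw (\<lambda>C. (comb_starts k C, first_parity k C)) ?M ?A"
  proof (rule bij_betw_byWitness[where f' = "\<lambda>(S, e). fill_half_squares l (long_combs k S e)"])
    show "\<forall>C\<in>?M. (\<lambda>(S, e). fill_half_squares l (long_combs k S e)) (comb_starts k C, first_parity k C) = C"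
      using metatile_eq_fill_half_squares assms(1) by auto
    show "\<forall>a\<in>?A. (comb_starts k ((\<lambda>(S, e). fill_half_squares l (long_combs k S e)) a),
        first_parity k ((\<lambda>(S, e). fill_half_squares l (long_combs k S e)) a)) = a"
      using comb_starts_fill_long_combs first_parity_fill_long_combs assms by auto
    show "(\<lambda>C. (comb_starts k C, first_parity k C)) ` ?M \<subseteq> ?A"
      using admissible_comb_starts assms(1) by (auto simp: first_parity_def)
    show "(\<lambda>(S, e). fill_half_squares l (long_combs k S e)) ` ?A \<subseteq> ?M"
      using is_tiling_fill_long_combs fill_long_combs_no_cut_point is_mixed_fill_long_combs assms
      by (auto simp: is_metatile_def)
  qed
  then have "card ?M = card ?A"
    by (rule bij_betw_same_card)
  then show ?thesis
    by (simp add: card_cartesian_product)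
qed

section \<open>Permutations with displacements in \<open>{-2, -1, m}\<close>\<close>

lemma permutes_image_Collect:
  assumes p: "p permutes A"
  shows "p ` {i\<in>A. P (p i)} = {i\<in>A. P i}"
proof (intro equalityI subsetI)
  fix j assume "j \<in> p ` {i\<in>A. P (p i)}"
  then show "j \<in> {i\<in>A. P i}" using permutes_in_image[OF p] by blast
next
  fix j assume j: "j \<in> {i\<in>A. P i}"
  have "inv p j \<in> A" "p (inv p j) = j"
    using j permutes_in_image[OF permutes_inv[OF p]] permutes_inverses(1)[OF p] by auto
  then show "j \<in> p ` {i\<in>A. P (p i)}" using j by force
qed

lemma card_permutes_exits_eq_entries:
  assumes "p permutes A" "finite A"
  shows "card {i\<in>A. P i \<and> \<not> P (p i)} = card {i\<in>A. \<not> P i \<and> P (p i)}"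
proof -
  let ?both = "{i\<in>A. P i \<and> P (p i)}"
  have "card {i\<in>A. P i} = card (p ` {i\<in>A. P (p i)})"
    using permutes_image_Collect[OF assms(1), of P] by simp
  also have "\<dots> = card {i\<in>A. P (p i)}"
    by (rule card_image[OF permutes_inj_on[OF assms(1)]])
  finally have "card {i\<in>A. P i} = card {i\<in>A. P (p i)}" .
  moreover have "{i\<in>A. P i \<and> \<not> P (p i)} = {i\<in>A. P i} - ?both"
    "{i\<in>A. \<not> P i \<and> P (p i)} = {i\<in>A. P (p i)} - ?both"
    by auto
  moreover have "card ({i\<in>A. P i} - ?both) = card {i\<in>A. P i} - card ?both"
    "card ({i\<in>A. P (p i)} - ?both) = card {i\<in>A. P (p i)} - card ?both"
    using assms(2) by (auto intro!: card_Diff_subset)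
  ultimately show ?thesis
    by simp
qed

definition jump_perm :: "nat \<Rightarrow> nat \<Rightarrow> (nat \<Rightarrow> nat) \<Rightarrow> bool" where
  "jump_perm m n p \<longleftrightarrow>
     p permutes {1..n} \<and> (\<forall>i\<in>{1..n}. p i = i + m \<or> p i + 1 = i \<or> p i + 2 = i)"

lemma P_W_eq_card_jump_perm: "P_W n {-2, -1, int m} = card {p. jump_perm m n p}"
proof -
  have step: "int j - int i \<in> {-2, -1, int m} \<longleftrightarrow> j = i + m \<or> j + 1 = i \<or> j + 2 = i" for i j :: nat
    by (simp only: insert_iff empty_iff) presburger
  show ?thesis
    unfolding P_W_def jump_perm_def step by (rule refl)
qed

definition jumps :: "nat \<Rightarrow> nat \<Rightarrow> (nat \<Rightarrow> nat) \<Rightarrow> nat set" where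
  "jumps m n p = {i\<in>{1..n}. p i = i + m}"

definition covered_twice :: "nat \<Rightarrow> nat set \<Rightarrow> nat \<Rightarrow> bool" where
  "covered_twice m U y \<longleftrightarrow> (\<exists>a\<in>U. \<exists>b\<in>U. a < b \<and> b \<le> y \<and> y \<le> a + m)"

definition admissible_jumps :: "nat \<Rightarrow> nat \<Rightarrow> nat set \<Rightarrow> bool" where
  "admissible_jumps m n U \<longleftrightarrow>
     (\<forall>u\<in>U. 1 \<le> u \<and> u + m \<le> n) \<and> (\<forall>x. 1 \<le> x \<and> x \<le> n \<longrightarrow> (\<exists>u\<in>U. u \<le> x \<and> x \<le> u + m)) \<and>
     (\<forall>a\<in>U. \<forall>b\<in>U. \<forall>c\<in>U. a < b \<and> b < c \<longrightarrow> a + m + 2 \<le> c)"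

definition perm_of_jumps :: "nat \<Rightarrow> nat \<Rightarrow> nat set \<Rightarrow> nat \<Rightarrow> nat" where
  "perm_of_jumps m n U i =
     (if i \<notin> {1..n} then i else if i \<in> U then i + m
      else if covered_twice m U (i - 1) then i - 2 else i - 1)"

definition jumps_over :: "nat \<Rightarrow> nat set \<Rightarrow> nat \<Rightarrow> nat set" where
  "jumps_over m U x = {u\<in>U. u < x \<and> x \<le> u + m}"

lemma covered_twice_if_jumped_over_twice:
  assumes "a \<in> jumps_over m U x" "b \<in> jumps_over m U x" "a \<noteq> b"
  shows "covered_twice m U x"
proof (cases "a < b")
  case True
  then show ?thesis
    using assms unfolding jumps_over_def covered_twice_def by (intro bexI[of _ a] bexI[of _ b]) auto
next
  case False
  then have "b < a"
    using assms(3) by simp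
  then show ?thesis
    using assms unfolding jumps_over_def covered_twice_def by (intro bexI[of _ b] bexI[of _ a]) auto
qed

context
  fixes m n :: nat and p :: "nat \<Rightarrow> nat"
  assumes p: "jump_perm m n p"
begin

lemma jump_perm_permutes: "p permutes {1..n}"
  using p unfolding jump_perm_def by blast

lemma jump_perm_cases: "i \<in> {1..n} \<Longrightarrow> p i = i + m \<or> p i + 1 = i \<or> p i + 2 = i"
  using p unfolding jump_perm_def by blast

lemma jump_perm_in: "i \<in> {1..n} \<Longrightarrow> p i \<in> {1..n}"
  using permutes_in_image[OF jump_perm_permutes] by blast

text \<open>Balance the points crossing the cut between \<open>x - 1\<close> and \<open>x\<close> in both directions:
  upwards only jumps cross it, downwards only \<open>x\<close> (unless it jumps) and \<open>x + 1\<close> (if it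
  steps back by two).\<close>

lemma card_jumps_over:
  assumes "1 \<le> x" "x \<le> n"
  shows "card (jumps_over m (jumps m n p) x) =
    (if x \<in> jumps m n p then 0 else 1) + (if x + 1 \<le> n \<and> p (x + 1) + 2 = x + 1 then 1 else 0)"
proof -
  have up: "{i\<in>{1..n}. i < x \<and> \<not> p i < x} = jumps_over m (jumps m n p) x"
    unfolding jumps_over_def jumps_def using jump_perm_cases by force
  have down: "{i\<in>{1..n}. \<not> i < x \<and> p i < x} =
      (if x \<in> jumps m n p then {} else {x}) \<union> (if x + 1 \<le> n \<and> p (x + 1) + 2 = x + 1 then {x + 1} else {})"
  proof (intro set_eqI iffI)
    fix i assume i: "i \<in> {i\<in>{1..n}. \<not> i < x \<and> p i < x}"
    then have "i = x \<or> i = x + 1" using jump_perm_cases[of i] by auto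
    then show "i \<in> (if x \<in> jumps m n p then {} else {x}) \<union>
        (if x + 1 \<le> n \<and> p (x + 1) + 2 = x + 1 then {x + 1} else {})"
      using i jump_perm_cases[of i] unfolding jumps_def by auto
  next
    fix i assume "i \<in> (if x \<in> jumps m n p then {} else {x}) \<union>
        (if x + 1 \<le> n \<and> p (x + 1) + 2 = x + 1 then {x + 1} else {})"
    then show "i \<in> {i\<in>{1..n}. \<not> i < x \<and> p i < x}"
      using assms jump_perm_cases[of x] unfolding jumps_def by (auto split: if_splits)
  qed
  show ?thesis
    using card_permutes_exits_eq_entries[OF jump_perm_permutes, of "\<lambda>i. i < x"]
    unfolding up down by (simp split: if_splits)
qed

lemma finite_jumps_over: "finite (jumps_over m (jumps m n p) x)"
  unfolding jumps_over_def jumps_def by simp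

lemma jumps_over_nonempty:
  assumes "1 \<le> x" "x \<le> n" "x \<notin> jumps m n p"
  obtains u where "u \<in> jumps m n p" "u < x" "x \<le> u + m"
proof -
  have "card (jumps_over m (jumps m n p) x) \<noteq> 0"
    using card_jumps_over[OF assms(1,2)] assms(3) by simp
  then have "jumps_over m (jumps m n p) x \<noteq> {}"
    by (metis card.empty)
  then show ?thesis
    using that unfolding jumps_over_def by blast
qed

lemma jumps_over_jump_unique:
  assumes "x \<in> jumps m n p" "a \<in> jumps_over m (jumps m n p) x" "b \<in> jumps_over m (jumps m n p) x"
  shows "a = b"
proof -
  have "1 \<le> x" "x \<le> n"
    using assms(1) unfolding jumps_def by auto
  then have "card (jumps_over m (jumps m n p) x) \<le> 1"
    using card_jumps_over assms(1) by simp
  then show ?thesis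
    using assms(2,3) card_le_Suc0_iff_eq[OF finite_jumps_over] by auto
qed

lemma jumps_over_adjacent_jumps:
  assumes "x \<in> jumps m n p" "x + 1 \<in> jumps m n p"
  shows "jumps_over m (jumps m n p) x = {}"
proof -
  have "1 \<le> x" "x \<le> n" "p (x + 1) = x + 1 + m"
    using assms unfolding jumps_def by auto
  then have "card (jumps_over m (jumps m n p) x) = 0"
    using card_jumps_over assms(1) by simp
  then show ?thesis
    using finite_jumps_over by simp
qed

lemma step_back_two_if_jumped_over_twice:
  assumes "1 \<le> x" "x \<le> n"
    and "a \<in> jumps_over m (jumps m n p) x" "b \<in> jumps_over m (jumps m n p) x" "a \<noteq> b"
  shows "x + 1 \<le> n \<and> p (x + 1) + 2 = x + 1"
proof -
  have "\<not> card (jumps_over m (jumps m n p) x) \<le> 1"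
    using assms(3-5) card_le_Suc0_iff_eq[OF finite_jumps_over] by auto
  then show ?thesis
    using card_jumps_over[OF assms(1,2)] by (simp split: if_splits)
qed

lemma covered_twice_if_step_back_two:
  assumes "1 \<le> x" "x + 1 \<le> n" "p (x + 1) + 2 = x + 1"
  shows "covered_twice m (jumps m n p) x"
proof (cases "x \<in> jumps m n p")
  case True
  then have "card (jumps_over m (jumps m n p) x) = 1"
    using card_jumps_over assms by simp
  then obtain a where "a \<in> jumps_over m (jumps m n p) x"
    by (auto simp: card_1_singleton_iff)
  then show ?thesis
    using True unfolding covered_twice_def jumps_over_def by auto
next
  case False
  then have "\<not> card (jumps_over m (jumps m n p) x) \<le> 1"
    using card_jumps_over assms by simp
  then obtain a b where "a \<in> jumps_over m (jumps m n p) x" "b \<in> jumps_over m (jumps m n p) x" "a \<noteq> b"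
    using card_le_Suc0_iff_eq[OF finite_jumps_over] by auto
  then show ?thesis
    by (rule covered_twice_if_jumped_over_twice)
qed

lemma step_back_two_if_covered_twice:
  assumes "1 \<le> x" "x \<le> n" "covered_twice m (jumps m n p) x"
  shows "p (x + 1) + 2 = x + 1"
proof -
  obtain a b where ab: "a \<in> jumps m n p" "b \<in> jumps m n p" "a < b" "b \<le> x" "x \<le> a + m"
    using assms(3) unfolding covered_twice_def by blast
  then have a: "a \<in> jumps_over m (jumps m n p) x"
    unfolding jumps_over_def by simp
  show ?thesis
  proof (cases "x \<in> jumps m n p")
    case True
    then have "card (jumps_over m (jumps m n p) x) \<noteq> 0"
      using a finite_jumps_over by (metis card_0_eq empty_iff)
    then show ?thesis
      using card_jumps_over assms True by (simp split: if_splits)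
  next
    case False
    then have "b \<noteq> x"
      using ab(2) by blast
    then have "b \<in> jumps_over m (jumps m n p) x"
      using ab unfolding jumps_over_def by auto
    then show ?thesis
      using step_back_two_if_jumped_over_twice[OF assms(1,2) a] ab(3) by simp
  qed
qed

lemma one_mem_jumps:
  assumes "1 \<le> n"
  shows "1 \<in> jumps m n p"
proof (rule ccontr)
  assume "1 \<notin> jumps m n p"
  then obtain u where "u \<in> jumps m n p" "u < 1"
    by (rule jumps_over_nonempty[OF order_refl assms])
  then show False
    unfolding jumps_def by simp
qed

lemma jumps_sparse:
  assumes abc: "a \<in> jumps m n p" "b \<in> jumps m n p" "c \<in> jumps m n p" "a < b" "b < c"
  shows "a + m + 2 \<le> c"
proof (rule ccontr)
  have c: "1 \<le> c" "c \<le> n" "p c = c + m"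
    using abc(3) unfolding jumps_def by auto
  assume "\<not> a + m + 2 \<le> c"
  then consider "c \<le> a + m" | "c = a + m + 1" "b + 1 < c" | "c = a + m + 1" "b + 1 = c"
    using abc(4,5) by linarith
  then show False
  proof cases
    case 1
    then have "a \<in> jumps_over m (jumps m n p) c" "b \<in> jumps_over m (jumps m n p) c"
      using abc unfolding jumps_over_def by auto
    then show False
      using jumps_over_jump_unique[OF abc(3)] abc(4) by blast
  next
    case 2
    then have "a \<in> jumps_over m (jumps m n p) (c - 1)" "b \<in> jumps_over m (jumps m n p) (c - 1)"
      using abc unfolding jumps_over_def by auto
    then have "p (c - 1 + 1) + 2 = c - 1 + 1"
      using step_back_two_if_jumped_over_twice[of "c - 1"] c 2 abc(4) by auto
    then show False
      using c 2 by simp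
  next
    case 3
    then have "a \<in> jumps_over m (jumps m n p) b"
      using abc unfolding jumps_over_def by auto
    then show False
      using jumps_over_adjacent_jumps[OF abc(2)] abc(3) 3 by auto
  qed
qed

lemma admissible_jumps_jumps: "admissible_jumps m n (jumps m n p)"
proof -
  have fit: "1 \<le> u \<and> u + m \<le> n" if "u \<in> jumps m n p" for u
    using that jump_perm_in[of u] unfolding jumps_def by auto
  have cover: "\<exists>u\<in>jumps m n p. u \<le> x \<and> x \<le> u + m" if x: "1 \<le> x" "x \<le> n" for x
  proof (cases "x \<in> jumps m n p")
    case False
    then obtain u where "u \<in> jumps m n p" "u < x" "x \<le> u + m"
      by (rule jumps_over_nonempty[OF x])
    then show ?thesis
      by (intro bexI[of _ u]) simp_all
  qed (intro bexI[of _ x], simp_all)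
  show ?thesis
    unfolding admissible_jumps_def using fit cover jumps_sparse by blast
qed

lemma perm_of_jumps_jumps: "perm_of_jumps m n (jumps m n p) = p"
proof
  fix i
  show "perm_of_jumps m n (jumps m n p) i = p i"
  proof (cases "i \<in> {1..n} \<and> i \<notin> jumps m n p")
    case True
    then have "2 \<le> i"
      using one_mem_jumps by (cases "i = 1") auto
    then have "p (i - 1 + 1) + 2 = i - 1 + 1 \<longleftrightarrow> covered_twice m (jumps m n p) (i - 1)"
      using True covered_twice_if_step_back_two[of "i - 1"] step_back_two_if_covered_twice[of "i - 1"]
      by auto
    then have "p i + 2 = i \<longleftrightarrow> covered_twice m (jumps m n p) (i - 1)"
      using \<open>2 \<le> i\<close> by simp
    moreover have "p i + 1 = i \<or> p i + 2 = i"
      using jump_perm_cases[of i] True unfolding jumps_def by auto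
    ultimately show ?thesis
      using True unfolding perm_of_jumps_def by auto
  next
    case False
    then show ?thesis
      using permutes_not_in[OF jump_perm_permutes] unfolding perm_of_jumps_def jumps_def by auto
  qed
qed

end

lemma covered_twice_pred:
  assumes "covered_twice m U y" "y \<notin> U"
  shows "covered_twice m U (y - 1)"
proof -
  obtain a b where ab: "a \<in> U" "b \<in> U" "a < b" "b \<le> y" "y \<le> a + m"
    using assms(1) unfolding covered_twice_def by blast
  then have "b \<le> y - 1"
    using assms(2) by (cases "b = y") auto
  then show ?thesis
    unfolding covered_twice_def using ab by (intro bexI[of _ a] bexI[of _ b]) auto
qed

context
  fixes m n :: nat and U :: "nat set"
  assumes U: "admissible_jumps m n U"
begin

lemma admissible_jumps_bounds: "u \<in> U \<Longrightarrow> 1 \<le> u \<and> u + m \<le> n"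
  using U unfolding admissible_jumps_def by blast

lemma admissible_jumps_cover: "1 \<le> x \<Longrightarrow> x \<le> n \<Longrightarrow> \<exists>u\<in>U. u \<le> x \<and> x \<le> u + m"
  using U unfolding admissible_jumps_def by blast

lemma admissible_jumps_sparse: "a \<in> U \<Longrightarrow> b \<in> U \<Longrightarrow> c \<in> U \<Longrightarrow> a < b \<Longrightarrow> b < c \<Longrightarrow> a + m + 2 \<le> c"
  using U unfolding admissible_jumps_def by blast

lemma one_mem_admissible_jumps:
  assumes "1 \<le> n"
  shows "1 \<in> U"
proof -
  obtain u where "u \<in> U" "u \<le> 1"
    using admissible_jumps_cover[OF order_refl assms] by blast
  moreover have "1 \<le> u"
    using admissible_jumps_bounds[OF \<open>u \<in> U\<close>] by simp
  ultimately show ?thesis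
    by simp
qed

lemma perm_of_jumps_jump: "i \<in> U \<Longrightarrow> perm_of_jumps m n U i = i + m"
  using admissible_jumps_bounds[of i] unfolding perm_of_jumps_def by simp

lemma perm_of_jumps_step:
  assumes "i \<in> {1..n}" "i \<notin> U"
  shows "2 \<le> i" "perm_of_jumps m n U i = (if covered_twice m U (i - 1) then i - 2 else i - 1)"
proof -
  show "2 \<le> i"
    using assms one_mem_admissible_jumps by (cases "i = 1") auto
  show "perm_of_jumps m n U i = (if covered_twice m U (i - 1) then i - 2 else i - 1)"
    using assms unfolding perm_of_jumps_def by simp
qed

lemma perm_of_jumps_in:
  assumes i: "i \<in> {1..n}"
  shows "perm_of_jumps m n U i \<in> {1..n}"
proof (cases "i \<in> U")
  case True
  then show ?thesis
    using perm_of_jumps_jump[OF True] admissible_jumps_bounds[OF True] by simp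
next
  case False
  note step = perm_of_jumps_step[OF i False]
  show ?thesis
  proof (cases "covered_twice m U (i - 1)")
    case True
    then obtain a b where "a \<in> U" "a < b" "b \<le> i - 1"
      unfolding covered_twice_def by blast
    moreover have "1 \<le> a"
      using admissible_jumps_bounds[OF \<open>a \<in> U\<close>] by simp
    ultimately show ?thesis
      using step True i by auto
  next
    case False
    then show ?thesis
      using step i by auto
  qed
qed

lemma covered_twice_landing:
  assumes i: "i \<in> U" and succ: "i + m + 1 \<le> n" "i + m + 1 \<notin> U"
  shows "covered_twice m U (i + m)"
proof -
  obtain u where u: "u \<in> U" "u \<le> i + m + 1" "i + m + 1 \<le> u + m"
    using admissible_jumps_cover[of "i + m + 1"] succ(1) by auto
  have "u \<noteq> i + m + 1" "u \<noteq> i"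
    using u succ(2) by auto
  then consider "i < u" | "u < i"
    by linarith
  then show ?thesis
  proof cases
    case 1
    then show ?thesis
      unfolding covered_twice_def using u i \<open>u \<noteq> i + m + 1\<close>
      by (intro bexI[of _ i] bexI[of _ u]) auto
  next
    case 2
    then show ?thesis
      unfolding covered_twice_def using u i
      by (intro bexI[of _ u] bexI[of _ i]) auto
  qed
qed

lemma perm_of_jumps_jump_neq_step:
  assumes i: "i \<in> U" and j: "j \<in> {1..n}" "j \<notin> U"
  shows "perm_of_jumps m n U i \<noteq> perm_of_jumps m n U j"
proof
  assume eq: "perm_of_jumps m n U i = perm_of_jumps m n U j"
  note step = perm_of_jumps_step[OF j] and jump = perm_of_jumps_jump[OF i]
  show False
  proof (cases "covered_twice m U (j - 1)")
    case True
    then obtain a b where ab: "a \<in> U" "b \<in> U" "a < b" "b \<le> j - 1" "j - 1 \<le> a + m"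
      unfolding covered_twice_def by blast
    have "i + m = j - 2"
      using eq jump step True by simp
    then have "i < a"
      using ab step(1) by linarith
    then have "i + m + 2 \<le> b"
      using admissible_jumps_sparse[OF i ab(1,2)] ab(3) by simp
    then show False
      using ab \<open>i + m = j - 2\<close> step(1) by linarith
  next
    case False
    then have "i + m + 1 = j"
      using eq jump step by simp
    then show False
      using covered_twice_landing[OF i] j False by auto
  qed
qed

lemma perm_of_jumps_steps_neq:
  assumes i: "i \<in> {1..n}" "i \<notin> U" and j: "j \<in> {1..n}" "j \<notin> U" and "i < j"
  shows "perm_of_jumps m n U i \<noteq> perm_of_jumps m n U j"
proof
  assume "perm_of_jumps m n U i = perm_of_jumps m n U j"
  then have "j = i + 1" "\<not> covered_twice m U (i - 1)" "covered_twice m U (j - 1)"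
    using perm_of_jumps_step[OF i] perm_of_jumps_step[OF j] \<open>i < j\<close> by (auto split: if_splits)
  then show False
    using covered_twice_pred[of m U i] i(2) by simp
qed

lemma inj_on_perm_of_jumps: "inj_on (perm_of_jumps m n U) {1..n}"
proof (rule inj_onI)
  fix i j assume i: "i \<in> {1..n}" and j: "j \<in> {1..n}"
    and eq: "perm_of_jumps m n U i = perm_of_jumps m n U j"
  consider "i \<in> U" "j \<in> U" | "i \<in> U" "j \<notin> U" | "i \<notin> U" "j \<in> U" | "i \<notin> U" "j \<notin> U"
    by blast
  then show "i = j"
  proof cases
    case 1
    then show ?thesis
      using eq perm_of_jumps_jump by simp
  next
    case 2
    then show ?thesis
      using eq perm_of_jumps_jump_neq_step j by blast
  next
    case 3
    then show ?thesis
      using eq perm_of_jumps_jump_neq_step i by metis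
  next
    case 4
    then show ?thesis
      using eq perm_of_jumps_steps_neq i j by (metis linorder_neqE_nat)
  qed
qed

lemma jump_perm_perm_of_jumps: "jump_perm m n (perm_of_jumps m n U)"
proof -
  have "perm_of_jumps m n U ` {1..n} = {1..n}"
    using perm_of_jumps_in inj_on_perm_of_jumps by (intro endo_inj_surj) auto
  then have "perm_of_jumps m n U permutes {1..n}"
    using inj_on_perm_of_jumps by (intro bij_imp_permutes) (auto simp: bij_betw_def perm_of_jumps_def)
  moreover have "perm_of_jumps m n U i = i + m \<or> perm_of_jumps m n U i + 1 = i \<or>
      perm_of_jumps m n U i + 2 = i" if i: "i \<in> {1..n}" for i
    using perm_of_jumps_jump perm_of_jumps_step[OF i] by (cases "i \<in> U") auto
  ultimately show ?thesis
    unfolding jump_perm_def by blast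
qed

lemma jumps_perm_of_jumps: "jumps m n (perm_of_jumps m n U) = U"
proof -
  have "perm_of_jumps m n U i \<noteq> i + m" if "i \<in> {1..n}" "i \<notin> U" for i
    using perm_of_jumps_step[OF that] by auto
  then show ?thesis
    unfolding jumps_def using perm_of_jumps_jump admissible_jumps_bounds by force
qed

end

lemma card_jump_perm: "card {p. jump_perm m n p} = card {U. admissible_jumps m n U}"
proof -
  have "bij_betw (jumps m n) {p. jump_perm m n p} {U. admissible_jumps m n U}"
    by (rule bij_betw_byWitness[where f' = "perm_of_jumps m n"])
      (auto simp: perm_of_jumps_jumps admissible_jumps_jumps jump_perm_perm_of_jumps jumps_perm_of_jumps)
  then show ?thesis
    by (rule bij_betw_same_card)
qed

section \<open>Jump sets as shifted start sets\<close>

lemma admissible_jumps_Suc_image_iff: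
  "admissible_jumps m n (Suc ` S) \<longleftrightarrow> admissible_starts (m + 2) (Suc n) S"
proof -
  have fit: "(\<forall>u\<in>Suc ` S. 1 \<le> u \<and> u + m \<le> n) \<longleftrightarrow> (\<forall>s\<in>S. s + (m + 2) \<le> Suc n)"
    by auto
  have cover: "(\<exists>u\<in>Suc ` S. u \<le> x \<and> x \<le> u + m) \<longleftrightarrow> (\<exists>s\<in>S. s < x \<and> x < s + (m + 2))" for x
  proof -
    have "(\<exists>u\<in>Suc ` S. u \<le> x \<and> x \<le> u + m) \<longleftrightarrow> (\<exists>s\<in>S. Suc s \<le> x \<and> x \<le> Suc s + m)"
      by blast
    also have "\<dots> \<longleftrightarrow> (\<exists>s\<in>S. s < x \<and> x < s + (m + 2))"
      by (intro bex_cong refl) auto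
    finally show ?thesis .
  qed
  have cells: "(1 \<le> x \<and> x \<le> n) \<longleftrightarrow> (0 < x \<and> x < Suc n)" for x :: nat
    by auto
  have sparse: "(\<forall>a\<in>Suc ` S. \<forall>b\<in>Suc ` S. \<forall>c\<in>Suc ` S. a < b \<and> b < c \<longrightarrow> a + m + 2 \<le> c) \<longleftrightarrow>
      (\<forall>a\<in>S. \<forall>b\<in>S. \<forall>c\<in>S. a < b \<and> b < c \<longrightarrow> a + (m + 2) \<le> c)"
    by auto
  show ?thesis
    unfolding admissible_jumps_def admissible_starts_def fit cover cells sparse ..
qed

lemma card_admissible_jumps:
  "card {U. admissible_jumps m n U} = card {S. admissible_starts (m + 2) (Suc n) S}"
proof -
  have "{U. admissible_jumps m n U} = image Suc ` {S. admissible_starts (m + 2) (Suc n) S}"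
  proof (intro set_eqI iffI)
    fix U assume "U \<in> {U. admissible_jumps m n U}"
    then have U: "admissible_jumps m n U"
      by simp
    then have "U = Suc ` ((\<lambda>u. u - 1) ` U)"
      using admissible_jumps_bounds[OF U] by (force simp: image_image)
    then show "U \<in> image Suc ` {S. admissible_starts (m + 2) (Suc n) S}"
      using U admissible_jumps_Suc_image_iff by (metis imageI mem_Collect_eq)
  qed (auto simp: admissible_jumps_Suc_image_iff)
  moreover have "inj_on (image Suc) {S. admissible_starts (m + 2) (Suc n) S}"
    by (rule inj_onI) (simp add: inj_image_eq_iff)
  ultimately show ?thesis
    by (simp add: card_image)
qed

theorem theorem3:
  fixes m l :: nat
  assumes "l > 1"
  shows "mu 1 (m + 2) l = 2 * P_W (l - 1) {-2, -1, int m}"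
proof -
  have "mu 1 (m + 2) l = 2 * card {S. admissible_starts (m + 2) l S}"
    unfolding mu_def using card_mixed_metatiles assms by simp
  also have "\<dots> = 2 * card {U. admissible_jumps m (l - 1) U}"
    using card_admissible_jumps[of m "l - 1"] assms by simp
  also have "\<dots> = 2 * P_W (l - 1) {-2, -1, int m}"
    by (simp add: P_W_eq_card_jump_perm card_jump_perm)
  finally show ?thesis .
qed

end
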